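(* Let $G,H$ be locally compact second countable unimodular groups and $(\Omega,\mu)$ a $(G,H)$-coupling with associated maps $i\colon G\times Y\to\Omega$, $j\colon H\times X\to\Omega$. Then the associated cocycles $\omega_H\colon G\times X\to H$ and $\omega_G\colon H\times Y\to G$ are (essentially) locally bounded Borel maps.
   Context: A Borel map is locally bounded if it maps relatively compact sets to relatively compact sets. A $(G,H)$-coupling is a standard Borel measure space $(\Omega,\mu)$ (standard meaning: Borel isomorphic, via a map $\varphi$ with $\varphi,\varphi^{-1}$ locally bounded, onto a closed subset of $\mathbb{R}\sqcup\mathbb{Z}$ with $\varphi_*\mu$ equivalent to Lebesgue+counting measure on the range) with a locally bounded Borel action of $G\times H$, and measure preserving Borel isomorphisms $i\colon (G,\lambda_G)\times(Y,\mu_Y)\to\Omega$, $j\colon (H,\lambda_H)\times(X,\mu_X)\to\Omega$ with $X,Y$ standard and $0<\mu_X(X),\mu_Y(Y)<\infty$, such that $i,i^{-1},j,j^{-1}$ are locally bounded and essentially $G$- resp. $H$-equivariant ($i(g_0g,y)=g_0.i(g,y)$ for a.e. $y$ and all $g_0,g$; analogously for $j$). The induced $G$-action on $X$ is defined (a.e.) by $g.j(H\times\{x\})=j(H\times\{g.x\})$, and similarly $H$ acts on $Y$. The cocycle $\omega_H$ is defined by $g.j(h,x)=j(h\,\omega_H(g,x)^{-1},g.x)$ for a.e. $x\in X$ and all $h\in H$ (and set to the identity on a null set), and $\omega_G$ by $h.i(g,y)=i(g\,\omega_G(h,y)^{-1},h.y)$ for a.e. $y\in Y$ and all $g\in G$.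 *)

theory Defs
  imports "HOL-Analysis.Analysis"
begin

definition relcompact :: "'a::topological_space set \<Rightarrow> bool" where
  "relcompact A \<longleftrightarrow> compact (closure A)"

definition locally_bounded :: "('a::topological_space \<Rightarrow> 'b::topological_space) \<Rightarrow> bool" where
  "locally_bounded f \<longleftrightarrow> (\<forall>A. relcompact A \<longrightarrow> relcompact (f ` A))"

text \<open>Topology of the disjoint union: a set is closed iff its real part is closed
 (every subset of the discrete part Z is closed); it is relatively compact iff its
 real part is bounded and its integer part is finite.\<close>

definition RZ_closed :: "(real + int) set \<Rightarrow> bool" where
  "RZ_closed S \<longleftrightarrow> closed (Inl -` S)"

definition RZ_relcompact :: "(real + int) set \<Rightarrow> bool" where
  "RZ_relcompact A \<longleftrightarrow> bounded (Inl -` A) \<and> finite (Inr -` A)"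

definition RZ :: "(real + int) measure" where
  "RZ = measure_of UNIV {A. Inl -` A \<in> sets borel}
         (\<lambda>A. emeasure lborel (Inl -` A) + emeasure (count_space UNIV) (Inr -` A))"

definition standard_space :: "'a::topological_space measure \<Rightarrow> bool" where
  "standard_space M \<longleftrightarrow> sets M = sets borel \<and>
     (\<exists>(\<phi> :: 'a \<Rightarrow> real + int) \<psi> S. RZ_closed S \<and> (\<forall>w. \<phi> w \<in> S) \<and>
        (\<forall>w. \<psi> (\<phi> w) = w) \<and> (\<forall>s\<in>S. \<phi> (\<psi> s) = s) \<and>
        \<phi> \<in> M \<rightarrow>\<^sub>M RZ \<and> \<psi> \<in> restrict_space RZ S \<rightarrow>\<^sub>M M \<and>
        (\<forall>A. relcompact A \<longrightarrow> RZ_relcompact (\<phi> ` A)) \<and>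
        (\<forall>A. A \<subseteq> S \<longrightarrow> RZ_relcompact A \<longrightarrow> relcompact (\<psi> ` A)) \<and>
        (\<forall>A \<in> sets RZ. A \<subseteq> S \<longrightarrow> (emeasure M (\<phi> -` A) = 0 \<longleftrightarrow> emeasure RZ A = 0)))"

text \<open>Groups are written additively (class group_add is not assumed commutative).
 The group is a Hausdorff second countable topological group (type class) which is
 locally compact; lam is a Haar measure which is both left and right invariant
 (unimodularity).\<close>

definition unimodular_lcsc_group ::
  "'g::{topological_group_add, t2_space, second_countable_topology} measure \<Rightarrow> bool" where
  "unimodular_lcsc_group lam \<longleftrightarrow>
     locally_compact_space (euclidean :: 'g topology) \<and>
     sets lam = sets borel \<and>
     (\<forall>K. compact K \<longrightarrow> emeasure lam K < \<infinity>) \<and>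
     (\<forall>U. open U \<and> U \<noteq> {} \<longrightarrow> 0 < emeasure lam U) \<and>
     (\<forall>g A. A \<in> sets borel \<longrightarrow>
        emeasure lam ((\<lambda>x. g + x) ` A) = emeasure lam A \<and>
        emeasure lam ((\<lambda>x. x + g) ` A) = emeasure lam A)"

text \<open>act g h w is the action of (g,h) in G x H on Omega.\<close>

definition coupling ::
  "'g::topological_group_add measure \<Rightarrow> 'h::topological_group_add measure \<Rightarrow>
   'w::topological_space measure \<Rightarrow> ('g \<Rightarrow> 'h \<Rightarrow> 'w \<Rightarrow> 'w) \<Rightarrow>
   'x::topological_space measure \<Rightarrow> 'y::topological_space measure \<Rightarrow>
   ('g \<times> 'y \<Rightarrow> 'w) \<Rightarrow> ('h \<times> 'x \<Rightarrow> 'w) \<Rightarrow> bool" where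
  "coupling lamG lamH mu act muX muY i j \<longleftrightarrow>
     standard_space mu \<and> standard_space muX \<and> standard_space muY \<and>
     0 < emeasure muX (space muX) \<and> emeasure muX (space muX) < \<infinity> \<and>
     0 < emeasure muY (space muY) \<and> emeasure muY (space muY) < \<infinity> \<and>
     \<comment> \<open>locally bounded Borel action of G x H\<close>
     (\<forall>w. act 0 0 w = w) \<and>
     (\<forall>g1 g2 h1 h2 w. act (g1 + g2) (h1 + h2) w = act g1 h1 (act g2 h2 w)) \<and>
     (\<lambda>p. act (fst (fst p)) (snd (fst p)) (snd p)) \<in> ((borel \<Otimes>\<^sub>M borel) \<Otimes>\<^sub>M mu) \<rightarrow>\<^sub>M mu \<and>
     locally_bounded (\<lambda>p. act (fst (fst p)) (snd (fst p)) (snd p)) \<and>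
     \<comment> \<open>i : G x Y -> Omega\<close>
     bij i \<and> i \<in> (lamG \<Otimes>\<^sub>M muY) \<rightarrow>\<^sub>M mu \<and> inv i \<in> mu \<rightarrow>\<^sub>M (lamG \<Otimes>\<^sub>M muY) \<and>
     distr (lamG \<Otimes>\<^sub>M muY) mu i = mu \<and>
     locally_bounded i \<and> locally_bounded (inv i) \<and>
     (AE y in muY. \<forall>g0 g. i (g0 + g, y) = act g0 0 (i (g, y))) \<and>
     \<comment> \<open>j : H x X -> Omega\<close>
     bij j \<and> j \<in> (lamH \<Otimes>\<^sub>M muX) \<rightarrow>\<^sub>M mu \<and> inv j \<in> mu \<rightarrow>\<^sub>M (lamH \<Otimes>\<^sub>M muX) \<and>
     distr (lamH \<Otimes>\<^sub>M muX) mu j = mu \<and>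
     locally_bounded j \<and> locally_bounded (inv j) \<and>
     (AE x in muX. \<forall>h0 h. j (h0 + h, x) = act 0 h0 (j (h, x)))"

end

theory Submission
  imports Defs
begin

text \<open>Since j is a bijection intertwining the H-actions, the cocycle identity at h = 0 gives the
 explicit formula omegaH g x = - fst (j\<inverse> (g . j (0, x))) for almost every x.  The right-hand side
 is a composition of Borel, locally bounded maps (j, j\<inverse>, the action, continuous maps into
 Hausdorff spaces), so it is the required Borel, locally bounded version of omegaH; the same
 argument with i in place of j handles omegaG.\<close>

lemma relcompact_iff_closed_compact_superset:
  "relcompact A \<longleftrightarrow> (\<exists>K. compact K \<and> closed K \<and> A \<subseteq> K)"
  unfolding relcompact_def
  by (metis closed_closure closure_minimal closure_subset compact_Int_closed inf.absorb_iff2)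

lemma relcompact_subset: "relcompact B \<Longrightarrow> A \<subseteq> B \<Longrightarrow> relcompact A"
  unfolding relcompact_iff_closed_compact_superset by blast

lemma relcompact_Times: "relcompact A \<Longrightarrow> relcompact B \<Longrightarrow> relcompact (A \<times> B)"
  unfolding relcompact_def closure_Times by (rule compact_Times)

lemma relcompact_continuous_image:
  fixes f :: "'a::topological_space \<Rightarrow> 'b::t2_space"
  assumes "continuous_on UNIV f" and "relcompact A"
  shows "relcompact (f ` A)"
proof -
  have "compact (f ` closure A)"
    using assms by (auto simp: relcompact_def intro: compact_continuous_image continuous_on_subset)
  then show ?thesis
    unfolding relcompact_iff_closed_compact_superset
    using closure_subset by (blast intro: compact_imp_closed)
qed

text \<open>The spaces X, Y and Omega need not be Hausdorff, so compact sets need not be closed;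
 the tube lemma takes over that role for projections.\<close>

lemma closed_fst_image:
  fixes K :: "('a::topological_space \<times> 'b::topological_space) set"
  assumes "compact K" and "closed K"
  shows "closed (fst ` K)"
  unfolding closed_def open_subopen[of "- fst ` K"]
proof (intro ballI)
  fix x assume "x \<in> - fst ` K"
  then have "{x} \<times> snd ` K \<subseteq> - K"
    by (auto intro: rev_image_eqI)
  moreover have "compact (snd ` K)"
    using assms(1) by (rule compact_continuous_image[OF continuous_on_snd[OF continuous_on_id]])
  ultimately have "\<exists>U. x \<in> U \<and> open U \<and> U \<times> snd ` K \<subseteq> - K"
    using Elementary_Topology.tube_lemma open_Compl[OF assms(2)] by simp
  then obtain U where "x \<in> U" "open U" "U \<times> snd ` K \<subseteq> - K"
    by blast
  moreover have "U \<subseteq> - fst ` K"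
    using \<open>U \<times> snd ` K \<subseteq> - K\<close> by (auto simp: subset_eq) (metis snd_conv)
  ultimately show "\<exists>U. open U \<and> x \<in> U \<and> U \<subseteq> - fst ` K"
    by blast
qed

lemma closed_snd_image:
  fixes K :: "('a::topological_space \<times> 'b::topological_space) set"
  assumes "compact K" and "closed K"
  shows "closed (snd ` K)"
proof -
  have swap: "prod.swap ` K = prod.swap -` K"
    by force
  have "compact (prod.swap ` K)"
    using assms by (intro compact_continuous_image continuous_intros)
  moreover have "closed (prod.swap ` K)"
    unfolding swap using assms by (intro closed_vimage continuous_intros)
  ultimately have "closed (fst ` prod.swap ` K)"
    by (rule closed_fst_image)
  moreover have "fst ` prod.swap ` K = snd ` K"
    by force
  ultimately show ?thesis
    by simp
qed

lemma relcompact_fst_image: "relcompact A \<Longrightarrow> relcompact (fst ` A)"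
  unfolding relcompact_iff_closed_compact_superset
  by (meson closed_fst_image compact_continuous_image[OF continuous_on_fst[OF continuous_on_id]] image_mono)

lemma relcompact_snd_image: "relcompact A \<Longrightarrow> relcompact (snd ` A)"
  unfolding relcompact_iff_closed_compact_superset
  by (meson closed_snd_image compact_continuous_image[OF continuous_on_snd[OF continuous_on_id]] image_mono)

lemma locally_bounded_id: "locally_bounded id"
  by (simp add: locally_bounded_def)

lemma locally_bounded_comp:
  "locally_bounded f \<Longrightarrow> locally_bounded g \<Longrightarrow> locally_bounded (g \<circ> f)"
  unfolding locally_bounded_def by (metis image_comp)

lemma continuous_imp_locally_bounded:
  fixes f :: "'a::topological_space \<Rightarrow> 'b::t2_space"
  shows "continuous_on UNIV f \<Longrightarrow> locally_bounded f"
  by (simp add: locally_bounded_def relcompact_continuous_image)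

lemma locally_bounded_map_prod:
  fixes f :: "'a::topological_space \<Rightarrow> 'c::topological_space"
    and g :: "'b::topological_space \<Rightarrow> 'd::topological_space"
  assumes "locally_bounded f" and "locally_bounded g"
  shows "locally_bounded (map_prod f g)"
  unfolding locally_bounded_def
proof (intro allI impI)
  fix A :: "('a \<times> 'b) set" assume "relcompact A"
  then have "relcompact (f ` fst ` A \<times> g ` snd ` A)"
    using assms by (simp add: locally_bounded_def relcompact_Times relcompact_fst_image relcompact_snd_image)
  then show "relcompact (map_prod f g ` A)"
    by (rule relcompact_subset) force
qed

lemma locally_bounded_Pair:
  fixes c :: "'a::t1_space"
  shows "locally_bounded (Pair c :: 'b::topological_space \<Rightarrow> 'a \<times> 'b)"
  unfolding locally_bounded_def
proof (intro allI impI)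
  fix A :: "'b set" assume "relcompact A"
  moreover have "relcompact {c}"
    by (simp add: relcompact_def)
  ultimately have "relcompact ({c} \<times> A)"
    by (rule relcompact_Times[rotated])
  then show "relcompact (Pair c ` A)"
    by (rule relcompact_subset) blast
qed

lemma locally_bounded_precomp_fst:
  fixes e :: "'a::topological_space \<Rightarrow> 'b::t2_space"
  assumes "locally_bounded P" and "continuous_on UNIV e"
  shows "locally_bounded (\<lambda>p. P (e (fst p), snd p))"
proof -
  have "(\<lambda>p. P (e (fst p), snd p)) = P \<circ> map_prod e id"
    by (simp add: fun_eq_iff map_prod_def split_beta)
  then show ?thesis
    using assms by (simp add: locally_bounded_comp locally_bounded_map_prod
        continuous_imp_locally_bounded locally_bounded_id)
qed

lemma measurable_precomp_fst:
  fixes e :: "'a::topological_space \<Rightarrow> 'g::second_countable_topology \<times> 'h::second_countable_topology"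
  assumes "P \<in> (borel \<Otimes>\<^sub>M borel) \<Otimes>\<^sub>M N \<rightarrow>\<^sub>M N" and "continuous_on UNIV e"
  shows "(\<lambda>p. P (e (fst p), snd p)) \<in> borel \<Otimes>\<^sub>M N \<rightarrow>\<^sub>M N"
proof -
  have "e \<in> borel \<rightarrow>\<^sub>M borel \<Otimes>\<^sub>M borel"
    using assms(2) by (simp add: borel_prod borel_measurable_continuous_onI)
  then show ?thesis
    using assms(1) by measurable
qed

definition cocycle_of :: "('h::group_add \<times> 'x \<Rightarrow> 'w) \<Rightarrow> ('a \<Rightarrow> 'w \<Rightarrow> 'w) \<Rightarrow> 'a \<Rightarrow> 'x \<Rightarrow> 'h" where
  "cocycle_of j \<alpha> a x = - fst (inv j (\<alpha> a (j (0, x))))"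

lemma cocycle_eq_cocycle_of:
  assumes "inj j" and "\<forall>a h. \<alpha> a (j (h, x)) = j (h - \<omega> a x, \<beta> a x)"
  shows "\<forall>a. \<omega> a x = cocycle_of j \<alpha> a x"
  using assms by (simp add: cocycle_of_def)

lemma locally_bounded_cocycle_of:
  fixes j :: "'h::{topological_group_add, t2_space} \<times> 'x::topological_space \<Rightarrow> 'w::topological_space"
  assumes "locally_bounded j" and "locally_bounded (inv j)"
    and "locally_bounded (\<lambda>p. \<alpha> (fst p) (snd p))"
  shows "locally_bounded (\<lambda>p. cocycle_of j \<alpha> (fst p) (snd p))"
proof -
  have "(\<lambda>p. cocycle_of j \<alpha> (fst p) (snd p))
      = (uminus \<circ> fst) \<circ> inv j \<circ> (\<lambda>p. \<alpha> (fst p) (snd p)) \<circ> map_prod id (j \<circ> Pair 0)"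
    by (simp add: fun_eq_iff cocycle_of_def)
  moreover have "locally_bounded (uminus \<circ> fst :: 'h \<times> 'x \<Rightarrow> 'h)"
    by (intro continuous_imp_locally_bounded continuous_intros)
  ultimately show ?thesis
    using assms by (simp add: locally_bounded_comp locally_bounded_map_prod
        locally_bounded_id locally_bounded_Pair)
qed

lemma measurable_cocycle_of:
  fixes j :: "'h::topological_group_add \<times> 'x \<Rightarrow> 'w"
  assumes "sets lamH = sets (borel :: 'h measure)"
    and "j \<in> lamH \<Otimes>\<^sub>M M \<rightarrow>\<^sub>M N" and "inv j \<in> N \<rightarrow>\<^sub>M lamH \<Otimes>\<^sub>M M'"
    and "(\<lambda>p. \<alpha> (fst p) (snd p)) \<in> borel \<Otimes>\<^sub>M N \<rightarrow>\<^sub>M N"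
  shows "(\<lambda>p. cocycle_of j \<alpha> (fst p) (snd p)) \<in> borel_measurable ((borel :: 'a::topological_space measure) \<Otimes>\<^sub>M M)"
proof -
  have j: "j \<in> borel \<Otimes>\<^sub>M M \<rightarrow>\<^sub>M N" and inv_j: "inv j \<in> N \<rightarrow>\<^sub>M borel \<Otimes>\<^sub>M M'"
    using assms(2,3) by (simp_all cong: measurable_cong_sets sets_pair_measure_cong[OF assms(1)])
  have "(\<lambda>p. (fst p, j (0, snd p))) \<in> (borel :: 'a measure) \<Otimes>\<^sub>M M \<rightarrow>\<^sub>M borel \<Otimes>\<^sub>M N"
    using j by measurable
  from measurable_compose[OF this assms(4)]
  have "(\<lambda>p. \<alpha> (fst p) (j (0, snd p))) \<in> (borel :: 'a measure) \<Otimes>\<^sub>M M \<rightarrow>\<^sub>M N"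
    by simp
  moreover have "(\<lambda>w. - fst (inv j w)) \<in> borel_measurable N"
    using measurable_compose[OF inv_j measurable_fst]
      borel_measurable_continuous_onI[OF continuous_on_minus[OF continuous_on_id]]
    by (rule measurable_compose)
  ultimately show ?thesis
    unfolding cocycle_of_def by (rule measurable_compose)
qed

lemma cocycle_has_locally_bounded_version:
  fixes j :: "'h::{topological_group_add, t2_space} \<times> 'x::topological_space \<Rightarrow> 'w::topological_space"
    and \<alpha> :: "'a::topological_space \<Rightarrow> 'w \<Rightarrow> 'w"
  assumes "sets lamH = sets (borel :: 'h measure)" and "bij j"
    and "j \<in> lamH \<Otimes>\<^sub>M muX \<rightarrow>\<^sub>M mu" and "inv j \<in> mu \<rightarrow>\<^sub>M lamH \<Otimes>\<^sub>M muX"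
    and "locally_bounded j" and "locally_bounded (inv j)"
    and "(\<lambda>p. \<alpha> (fst p) (snd p)) \<in> borel \<Otimes>\<^sub>M mu \<rightarrow>\<^sub>M mu"
    and "locally_bounded (\<lambda>p. \<alpha> (fst p) (snd p))"
    and "AE x in muX. \<forall>a h. \<alpha> a (j (h, x)) = j (h - \<omega> a x, \<beta> a x)"
  shows "\<exists>w'. (\<lambda>p. w' (fst p) (snd p)) \<in> borel_measurable (borel \<Otimes>\<^sub>M muX) \<and>
              locally_bounded (\<lambda>p. w' (fst p) (snd p)) \<and>
              (AE x in muX. \<forall>a. \<omega> a x = w' a x)"
proof (intro exI conjI)
  show "(\<lambda>p. cocycle_of j \<alpha> (fst p) (snd p)) \<in> borel_measurable (borel \<Otimes>\<^sub>M muX)"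
    using assms(1,3,4,7) by (rule measurable_cocycle_of)
  show "locally_bounded (\<lambda>p. cocycle_of j \<alpha> (fst p) (snd p))"
    using assms(5,6,8) by (rule locally_bounded_cocycle_of)
  show "AE x in muX. \<forall>a. \<omega> a x = cocycle_of j \<alpha> a x"
    using assms(9) by eventually_elim (rule cocycle_eq_cocycle_of[OF bij_is_inj[OF assms(2)]])
qed

theorem proposition3p9:
  fixes lamG :: "'g::{topological_group_add, t2_space, second_countable_topology} measure"
    and lamH :: "'h::{topological_group_add, t2_space, second_countable_topology} measure"
    and mu :: "'w::topological_space measure"
    and act :: "'g \<Rightarrow> 'h \<Rightarrow> 'w \<Rightarrow> 'w"
    and muX :: "'x::topological_space measure" and muY :: "'y::topological_space measure"
    and i :: "'g \<times> 'y \<Rightarrow> 'w" and j :: "'h \<times> 'x \<Rightarrow> 'w"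
    and actX :: "'g \<Rightarrow> 'x \<Rightarrow> 'x" and actY :: "'h \<Rightarrow> 'y \<Rightarrow> 'y"
    and omegaH :: "'g \<Rightarrow> 'x \<Rightarrow> 'h" and omegaG :: "'h \<Rightarrow> 'y \<Rightarrow> 'g"
  assumes "unimodular_lcsc_group lamG" and "unimodular_lcsc_group lamH"
    and "coupling lamG lamH mu act muX muY i j"
    and "AE x in muX. \<forall>g. act g 0 ` j ` (UNIV \<times> {x}) = j ` (UNIV \<times> {actX g x})"
    and "AE y in muY. \<forall>h. act 0 h ` i ` (UNIV \<times> {y}) = i ` (UNIV \<times> {actY h y})"
    and "AE x in muX. \<forall>g h. act g 0 (j (h, x)) = j (h - omegaH g x, actX g x)"
    and "AE y in muY. \<forall>h g. act 0 h (i (g, y)) = i (g - omegaG h y, actY h y)"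
  shows "(\<exists>w'. (\<lambda>p. w' (fst p) (snd p)) \<in> borel_measurable (borel \<Otimes>\<^sub>M muX) \<and>
              locally_bounded (\<lambda>p. w' (fst p) (snd p)) \<and>
              (AE x in muX. \<forall>g. omegaH g x = w' g x)) \<and>
         (\<exists>w'. (\<lambda>p. w' (fst p) (snd p)) \<in> borel_measurable (borel \<Otimes>\<^sub>M muY) \<and>
              locally_bounded (\<lambda>p. w' (fst p) (snd p)) \<and>
              (AE y in muY. \<forall>h. omegaG h y = w' h y))"
proof
  define P where "P = (\<lambda>p. act (fst (fst p)) (snd (fst p)) (snd p))"
  have P: "P \<in> (borel \<Otimes>\<^sub>M borel) \<Otimes>\<^sub>M mu \<rightarrow>\<^sub>M mu" "locally_bounded P"
    and i: "bij i" "i \<in> lamG \<Otimes>\<^sub>M muY \<rightarrow>\<^sub>M mu" "inv i \<in> mu \<rightarrow>\<^sub>M lamG \<Otimes>\<^sub>M muY"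
      "locally_bounded i" "locally_bounded (inv i)"
    and j: "bij j" "j \<in> lamH \<Otimes>\<^sub>M muX \<rightarrow>\<^sub>M mu" "inv j \<in> mu \<rightarrow>\<^sub>M lamH \<Otimes>\<^sub>M muX"
      "locally_bounded j" "locally_bounded (inv j)"
    using assms(3) unfolding coupling_def P_def by simp_all
  have sets: "sets lamG = sets borel" "sets lamH = sets borel"
    using assms(1,2) by (simp_all add: unimodular_lcsc_group_def)
  have "continuous_on UNIV (\<lambda>g::'g. (g, 0::'h))" and "continuous_on UNIV (\<lambda>h::'h. (0::'g, h))"
    by (intro continuous_intros)+
  note actions = this[THEN measurable_precomp_fst[OF P(1)]] this[THEN locally_bounded_precomp_fst[OF P(2)]]
  show "\<exists>w'. (\<lambda>p. w' (fst p) (snd p)) \<in> borel_measurable (borel \<Otimes>\<^sub>M muX) \<and>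
              locally_bounded (\<lambda>p. w' (fst p) (snd p)) \<and>
              (AE x in muX. \<forall>g. omegaH g x = w' g x)"
    using cocycle_has_locally_bounded_version[OF sets(2) j, of "\<lambda>g. act g 0"] actions(1,3) assms(6)
    unfolding P_def by simp
  show "\<exists>w'. (\<lambda>p. w' (fst p) (snd p)) \<in> borel_measurable (borel \<Otimes>\<^sub>M muY) \<and>
              locally_bounded (\<lambda>p. w' (fst p) (snd p)) \<and>
              (AE y in muY. \<forall>h. omegaG h y = w' h y)"
    using cocycle_has_locally_bounded_version[OF sets(1) i, of "\<lambda>h. act 0 h"] actions(2,4) assms(7)
    unfolding P_def by simp
qed

end
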